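(* Let $G=(V,E)$ be a connected graph such that $(V,\mathcal{M}_{m^3_3}(G))$ is a convex geometry. Then $G$ is house-free, hole-free and domino-free.
   Context: All graphs are finite and simple. A path in $G$ is induced if it is an induced subgraph of $G$; its length is its number of edges. For vertices $u,v$, the $m^3$-interval $I_{m^3}[u,v]$ is the set of all vertices lying on some induced $u$–$v$ path of length at least $3$. A set $S\subseteq V$ is $m^3$-convex if $I_{m^3}[u,v]\subseteq S$ for all $u,v\in S$. For $U\subseteq V$ with $|U|\ge 2$, a minimal $U$-tree is a subgraph $T$ of $G$ containing $U$ such that $T$ is a tree and every vertex of $V(T)\setminus U$ is a cut-vertex of the subgraph of $G$ induced by $V(T)$; the monophonic interval $I_m(U)$ is the set of all vertices lying in some minimal $U$-tree. A set $S$ is $m_3$-convex if $I_m(U)\subseteq S$ for every $3$-element subset $U\subseteq S$. A set is $m^3_3$-convex if it is both $m^3$-convex and $m_3$-convex; $\mathcal{M}_{m^3_3}(G)$ denotes the family of $m^3_3$-convex sets. An alignment of a finite set $V$ is a family $\mathcal{M}$ of subsets of $V$ closed under intersection and containing $\emptyset$ and $V$; its members are called convex sets. The convex hull of $S\subseteq V$ is the smallest convex set containing $S$. For $X\in\mathcal{M}$, $x\in X$ is an extreme point of $X$ if $X\setminus\{x\}\in\mathcal{M}$. $(V,\mathcal{M})$ is a convex geometry if every convex set is the convex hull of its set of extreme points. A hole is an induced cycle of length at least $5$. The house is the graph obtained from a $4$-cycle $x_1x_2x_3x_4x_1$ by adding a vertex $y$ adjacent exactly to $x_1$ and $x_2$.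 The domino is the graph on six vertices consisting of a $6$-cycle $x_1x_2\dots x_6x_1$ together with the single chord $x_1x_4$. $G$ is $F$-free if it has no induced subgraph isomorphic to $F$ (hole-free: no induced cycle of length at least $5$). *)

theory Defs
  imports Main
begin

definition graph :: "'a set \<Rightarrow> 'a set set \<Rightarrow> bool" where
  "graph V E \<longleftrightarrow> finite V \<and>
     (\<forall>e\<in>E. \<exists>u v. e = {u, v} \<and> u \<noteq> v \<and> u \<in> V \<and> v \<in> V)"

definition adj :: "'a set set \<Rightarrow> 'a \<Rightarrow> 'a \<Rightarrow> bool" where
  "adj E u v \<longleftrightarrow> u \<noteq> v \<and> {u, v} \<in> E"

definition induced_edges :: "'a set set \<Rightarrow> 'a set \<Rightarrow> 'a set set" where
  "induced_edges E S = {e \<in> E. e \<subseteq> S}"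

definition adjrel :: "'a set \<Rightarrow> 'a set set \<Rightarrow> ('a \<times> 'a) set" where
  "adjrel W F = {(x, y). x \<in> W \<and> y \<in> W \<and> adj F x y}"

definition reach :: "'a set \<Rightarrow> 'a set set \<Rightarrow> 'a \<Rightarrow> 'a \<Rightarrow> bool" where
  "reach W F x y \<longleftrightarrow> x \<in> W \<and> y \<in> W \<and> (x, y) \<in> (adjrel W F)\<^sup>*"

definition connected_graph :: "'a set \<Rightarrow> 'a set set \<Rightarrow> bool" where
  "connected_graph W F \<longleftrightarrow> W \<noteq> {} \<and> (\<forall>x\<in>W. \<forall>y\<in>W. reach W F x y)"

definition is_cycle :: "'a set \<Rightarrow> 'a set set \<Rightarrow> 'a list \<Rightarrow> bool" where
  "is_cycle W F cs \<longleftrightarrow> length cs \<ge> 3 \<and> distinct cs \<and> set cs \<subseteq> W \<and>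
     (\<forall>i < length cs. adj F (cs ! i) (cs ! ((i + 1) mod length cs)))"

definition is_tree :: "'a set \<Rightarrow> 'a set set \<Rightarrow> bool" where
  "is_tree W F \<longleftrightarrow> connected_graph W F \<and> \<not> (\<exists>cs. is_cycle W F cs)"

text \<open>Cut-vertex of the graph (W,F): a vertex x separating two other vertices of the
  same component (i.e. its deletion increases the number of components).\<close>
definition cut_vertex :: "'a set \<Rightarrow> 'a set set \<Rightarrow> 'a \<Rightarrow> bool" where
  "cut_vertex W F x \<longleftrightarrow> x \<in> W \<and>
     (\<exists>y z. y \<in> W - {x} \<and> z \<in> W - {x} \<and> reach W F y z \<and>
            \<not> reach (W - {x}) (induced_edges F (W - {x})) y z)"

text \<open>An induced u-v path, given as its vertex list; its length is length xs - 1.\<close>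
definition induced_path :: "'a set \<Rightarrow> 'a set set \<Rightarrow> 'a list \<Rightarrow> 'a \<Rightarrow> 'a \<Rightarrow> bool" where
  "induced_path V E xs u v \<longleftrightarrow> xs \<noteq> [] \<and> hd xs = u \<and> last xs = v \<and>
     distinct xs \<and> set xs \<subseteq> V \<and>
     (\<forall>i j. i < length xs \<and> j < length xs \<longrightarrow>
        (adj E (xs ! i) (xs ! j) \<longleftrightarrow> (j = i + 1 \<or> i = j + 1)))"

definition m3_interval :: "'a set \<Rightarrow> 'a set set \<Rightarrow> 'a \<Rightarrow> 'a \<Rightarrow> 'a set" where
  "m3_interval V E u v =
     {x. \<exists>xs. induced_path V E xs u v \<and> length xs - 1 \<ge> 3 \<and> x \<in> set xs}"

definition m3_convex :: "'a set \<Rightarrow> 'a set set \<Rightarrow> 'a set \<Rightarrow> bool" where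
  "m3_convex V E S \<longleftrightarrow> (\<forall>u\<in>S. \<forall>v\<in>S. m3_interval V E u v \<subseteq> S)"

definition minimal_tree :: "'a set \<Rightarrow> 'a set set \<Rightarrow> 'a set \<Rightarrow> 'a set \<Rightarrow> 'a set set \<Rightarrow> bool" where
  "minimal_tree V E U VT ET \<longleftrightarrow>
     VT \<subseteq> V \<and> ET \<subseteq> E \<and> (\<forall>e\<in>ET. e \<subseteq> VT) \<and> U \<subseteq> VT \<and>
     is_tree VT ET \<and>
     (\<forall>x\<in>VT - U. cut_vertex VT (induced_edges E VT) x)"

definition mono_interval :: "'a set \<Rightarrow> 'a set set \<Rightarrow> 'a set \<Rightarrow> 'a set" where
  "mono_interval V E U = {x. \<exists>VT ET. minimal_tree V E U VT ET \<and> x \<in> VT}"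

definition m_3_convex :: "'a set \<Rightarrow> 'a set set \<Rightarrow> 'a set \<Rightarrow> bool" where
  "m_3_convex V E S \<longleftrightarrow> (\<forall>U. U \<subseteq> S \<and> card U = 3 \<longrightarrow> mono_interval V E U \<subseteq> S)"

definition m33_convex_sets :: "'a set \<Rightarrow> 'a set set \<Rightarrow> 'a set set" where
  "m33_convex_sets V E = {S. S \<subseteq> V \<and> m3_convex V E S \<and> m_3_convex V E S}"

definition alignment :: "'a set \<Rightarrow> 'a set set \<Rightarrow> bool" where
  "alignment V M \<longleftrightarrow> M \<subseteq> Pow V \<and> {} \<in> M \<and> V \<in> M \<and>
     (\<forall>A\<in>M. \<forall>B\<in>M. A \<inter> B \<in> M)"

definition convex_hull_in :: "'a set set \<Rightarrow> 'a set \<Rightarrow> 'a set" where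
  "convex_hull_in M S = \<Inter>{X \<in> M. S \<subseteq> X}"

definition extreme_points :: "'a set set \<Rightarrow> 'a set \<Rightarrow> 'a set" where
  "extreme_points M X = {x \<in> X. X - {x} \<in> M}"

definition convex_geometry :: "'a set \<Rightarrow> 'a set set \<Rightarrow> bool" where
  "convex_geometry V M \<longleftrightarrow> alignment V M \<and>
     (\<forall>X\<in>M. X = convex_hull_in M (extreme_points M X))"

definition contains_induced :: "'a set \<Rightarrow> 'a set set \<Rightarrow> nat set \<Rightarrow> nat set set \<Rightarrow> bool" where
  "contains_induced V E P PE \<longleftrightarrow>
     (\<exists>f. inj_on f P \<and> f ` P \<subseteq> V \<and>
        (\<forall>x\<in>P. \<forall>y\<in>P. adj PE x y \<longleftrightarrow> adj E (f x) (f y)))"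

text \<open>House: 4-cycle 0-1-2-3-0 plus vertex 4 adjacent exactly to 0 and 1.\<close>
definition house_edges :: "nat set set" where
  "house_edges = {{0,1},{1,2},{2,3},{3,0},{4,0},{4,1}}"

text \<open>Domino: 6-cycle 0-1-2-3-4-5-0 plus chord 0-3.\<close>
definition domino_edges :: "nat set set" where
  "domino_edges = {{0,1},{1,2},{2,3},{3,4},{4,5},{5,0},{0,3}}"

definition cycle_edges :: "nat \<Rightarrow> nat set set" where
  "cycle_edges n = {{i, (i + 1) mod n} | i. i < n}"

definition house_free :: "'a set \<Rightarrow> 'a set set \<Rightarrow> bool" where
  "house_free V E \<longleftrightarrow> \<not> contains_induced V E {0..<5} house_edges"

definition domino_free :: "'a set \<Rightarrow> 'a set set \<Rightarrow> bool" where
  "domino_free V E \<longleftrightarrow> \<not> contains_induced V E {0..<6} domino_edges"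

definition hole_free :: "'a set \<Rightarrow> 'a set set \<Rightarrow> bool" where
  "hole_free V E \<longleftrightarrow> (\<forall>n\<ge>5. \<not> contains_induced V E {0..<n} (cycle_edges n))"

end

theory Submission
  imports Defs
begin

(* Suppose the m^3_3-convex sets of G form a convex geometry, and let A, B be
   two vertex sets that generate each other under m^3-convexity: every m^3-convex set
   containing one of them contains the other.  Then A and B have the same convex hull H,
   and every extreme point of H lies in both generating sets, i.e. in A \<inter> B.  Since H is the
   hull of its extreme points and singletons are convex, A \<inter> B \<subseteq> {v} forces A \<subseteq> {v}.
   A house, a hole or a domino yields such a pair of two-element sets A, B with
   A \<inter> B \<subseteq> {v} but A \<noteq> {v}: in each of these graphs, induced paths on four or more vertices
   (which m^3-convex sets must contain as soon as they contain their ends) lead from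
   either pair to the other. *)

lemma adj_sym: "adj E u v \<longleftrightarrow> adj E v u"
  by (auto simp: adj_def insert_commute)

lemma adj_irrefl: "\<not> adj E u u"
  by (simp add: adj_def)

lemma subset_convex_hull_in: "A \<subseteq> convex_hull_in M A"
  unfolding convex_hull_in_def by auto

lemma convex_hull_in_least: "X \<in> M \<Longrightarrow> A \<subseteq> X \<Longrightarrow> convex_hull_in M A \<subseteq> X"
  unfolding convex_hull_in_def by auto

lemma convex_hull_in_eqI:
  assumes "\<And>X. X \<in> M \<Longrightarrow> A \<subseteq> X \<longleftrightarrow> B \<subseteq> X"
  shows "convex_hull_in M A = convex_hull_in M B"
  unfolding convex_hull_in_def using assms by blast

text \<open>If the hull of A is itself convex, then each of its extreme points belongs to A:
  removing a point outside A leaves a convex set still containing A.\<close>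
lemma extreme_points_hull_subset:
  assumes "convex_hull_in M A \<in> M"
  shows "extreme_points M (convex_hull_in M A) \<subseteq> A"
proof
  fix x assume x: "x \<in> extreme_points M (convex_hull_in M A)"
  show "x \<in> A"
  proof (rule ccontr)
    assume "x \<notin> A"
    then have "A \<subseteq> convex_hull_in M A - {x}" using subset_convex_hull_in[of A M] by blast
    moreover have "convex_hull_in M A - {x} \<in> M" using x by (simp add: extreme_points_def)
    ultimately have "convex_hull_in M A \<subseteq> convex_hull_in M A - {x}"
      using convex_hull_in_least by blast
    with x show False by (auto simp: extreme_points_def)
  qed
qed

lemma convex_geometry_subset_by_extreme_points:
  assumes "convex_geometry V M" "H \<in> M" "C \<in> M" "extreme_points M H \<subseteq> C"
  shows "H \<subseteq> C"
proof -
  have "H = convex_hull_in M (extreme_points M H)"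
    using assms(1,2) by (auto simp: convex_geometry_def)
  also have "\<dots> \<subseteq> C" using assms(3,4) by (rule convex_hull_in_least)
  finally show ?thesis .
qed

lemma convex_geometry_common_generators:
  assumes cg: "convex_geometry V M"
    and hull: "convex_hull_in M A \<in> M"
    and same: "\<And>X. X \<in> M \<Longrightarrow> A \<subseteq> X \<longleftrightarrow> B \<subseteq> X"
    and C: "C \<in> M" "A \<inter> B \<subseteq> C"
  shows "A \<subseteq> C"
proof -
  have eq: "convex_hull_in M A = convex_hull_in M B" using same by (rule convex_hull_in_eqI)
  have "extreme_points M (convex_hull_in M A) \<subseteq> A \<inter> B"
    using extreme_points_hull_subset[OF hull] extreme_points_hull_subset[of M B] hull eq
    by auto
  then have "convex_hull_in M A \<subseteq> C"
    using convex_geometry_subset_by_extreme_points[OF cg hull C(1)] C(2) by blast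
  then show ?thesis using subset_convex_hull_in[of A M] by blast
qed

lemma m33_convex_sets_Inter:
  assumes "\<X> \<subseteq> m33_convex_sets V E" "\<X> \<noteq> {}"
  shows "\<Inter>\<X> \<in> m33_convex_sets V E"
proof -
  have mem: "S \<subseteq> V \<and> m3_convex V E S \<and> m_3_convex V E S" if "S \<in> \<X>" for S
    using assms(1) that by (auto simp: m33_convex_sets_def)
  have "\<Inter>\<X> \<subseteq> V" using mem assms(2) by blast
  moreover have "m3_convex V E (\<Inter>\<X>)"
    unfolding m3_convex_def
  proof (intro ballI subsetI InterI)
    fix u v x S assume "u \<in> \<Inter>\<X>" "v \<in> \<Inter>\<X>" "x \<in> m3_interval V E u v" "S \<in> \<X>"
    then show "x \<in> S" using mem[of S] unfolding m3_convex_def by blast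
  qed
  moreover have "m_3_convex V E (\<Inter>\<X>)"
    unfolding m_3_convex_def
  proof (intro allI impI subsetI InterI)
    fix U x S assume "U \<subseteq> \<Inter>\<X> \<and> card U = 3" "x \<in> mono_interval V E U" "S \<in> \<X>"
    then show "x \<in> S" using mem[of S] unfolding m_3_convex_def by blast
  qed
  ultimately show ?thesis by (simp add: m33_convex_sets_def)
qed

lemma m33_convex_sets_carrier: "V \<in> m33_convex_sets V E"
proof -
  have "m3_interval V E u v \<subseteq> V" for u v
    unfolding m3_interval_def induced_path_def by auto
  moreover have "mono_interval V E U \<subseteq> V" for U
    unfolding mono_interval_def minimal_tree_def by auto
  ultimately show ?thesis
    unfolding m33_convex_sets_def m3_convex_def m_3_convex_def by auto
qed

lemma m33_convex_hull_mem:
  assumes "A \<subseteq> V"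
  shows "convex_hull_in (m33_convex_sets V E) A \<in> m33_convex_sets V E"
  unfolding convex_hull_in_def
  using assms m33_convex_sets_carrier by (intro m33_convex_sets_Inter) auto

text \<open>A singleton is m^3_3-convex: induced paths have distinct ends, and no 3-set fits in it.\<close>
lemma m33_convex_singleton:
  assumes "v \<in> V"
  shows "{v} \<in> m33_convex_sets V E"
proof -
  have "m3_interval V E v v = {}"
  proof (rule ccontr)
    assume "m3_interval V E v v \<noteq> {}"
    then obtain xs where xs: "induced_path V E xs v v" "length xs \<ge> 4"
      unfolding m3_interval_def by auto
    then have "xs \<noteq> []" "distinct xs" "xs ! 0 = xs ! (length xs - 1)"
      unfolding induced_path_def by (auto simp: hd_conv_nth last_conv_nth)
    then have "0 = length xs - 1" by (simp add: nth_eq_iff_index_eq)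
    with xs(2) show False by simp
  qed
  moreover have "card U \<noteq> 3" if "U \<subseteq> {v}" for U :: "'a set"
    using card_mono[OF _ that] by fastforce
  ultimately show ?thesis
    using assms unfolding m33_convex_sets_def m3_convex_def m_3_convex_def by auto
qed

lemma m3_generators_meet_in_point:
  assumes cg: "convex_geometry V (m33_convex_sets V E)"
    and AV: "A \<subseteq> V" and v: "v \<in> V"
    and AB: "\<And>X. m3_convex V E X \<Longrightarrow> A \<subseteq> X \<Longrightarrow> B \<subseteq> X"
    and BA: "\<And>X. m3_convex V E X \<Longrightarrow> B \<subseteq> X \<Longrightarrow> A \<subseteq> X"
    and meet: "A \<inter> B \<subseteq> {v}"
  shows "A \<subseteq> {v}"
proof (rule convex_geometry_common_generators[OF cg m33_convex_hull_mem[OF AV]])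
  fix X assume "X \<in> m33_convex_sets V E"
  then have "m3_convex V E X" by (simp add: m33_convex_sets_def)
  then show "A \<subseteq> X \<longleftrightarrow> B \<subseteq> X" using AB BA by blast
next
  show "{v} \<in> m33_convex_sets V E" using v by (rule m33_convex_singleton)
qed (rule meet)

lemma induced_path_in_m3_convex:
  assumes "m3_convex V E X" "induced_path V E xs u v" "length xs \<ge> 4" "u \<in> X" "v \<in> X"
  shows "set xs \<subseteq> X"
proof -
  have "set xs \<subseteq> m3_interval V E u v"
    using assms(2,3) unfolding m3_interval_def by auto
  then show ?thesis using assms(1,4,5) unfolding m3_convex_def by blast
qed

lemma induced_P4_is_induced_path:
  assumes V: "a \<in> V" "b \<in> V" "c \<in> V" "d \<in> V" and dist: "distinct [a, b, c, d]"
    and edges: "adj E a b" "adj E b c" "adj E c d"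
    and non_edges: "\<not> adj E a c" "\<not> adj E a d" "\<not> adj E b d"
  shows "induced_path V E [a, b, c, d] a d"
proof -
  let ?xs = "[a, b, c, d]"
  have edges': "adj E b a" "adj E c b" "adj E d c"
    and non_edges': "\<not> adj E c a" "\<not> adj E d a" "\<not> adj E d b"
    using edges non_edges adj_sym by metis+
  have "adj E (?xs ! i) (?xs ! j) \<longleftrightarrow> j = i + 1 \<or> i = j + 1"
    if "i < 4" "j < 4" for i j
  proof -
    have "i = 0 \<or> i = 1 \<or> i = 2 \<or> i = 3" "j = 0 \<or> j = 1 \<or> j = 2 \<or> j = 3" using that by auto
    then show ?thesis
      using edges non_edges edges' non_edges' adj_irrefl[of E] by (elim disjE) simp_all
  qed
  then show ?thesis using V dist unfolding induced_path_def by auto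
qed

lemma induced_P4_in_m3_convex:
  assumes X: "m3_convex V E X" "a \<in> X" "d \<in> X"
    and V: "a \<in> V" "b \<in> V" "c \<in> V" "d \<in> V" and dist: "distinct [a, b, c, d]"
    and edges: "adj E a b" "adj E b c" "adj E c d"
    and non_edges: "\<not> adj E a c" "\<not> adj E a d" "\<not> adj E b d"
  shows "b \<in> X \<and> c \<in> X"
  using induced_path_in_m3_convex[OF X(1)
      induced_P4_is_induced_path[OF V dist edges non_edges] _ X(2,3)]
  by simp

lemma embedded_P4_in_m3_convex:
  assumes inj: "inj_on f P" and fP: "f ` P \<subseteq> V"
    and emb: "\<forall>x\<in>P. \<forall>y\<in>P. adj PE x y \<longleftrightarrow> adj E (f x) (f y)"
    and X: "m3_convex V E X" "f a \<in> X" "f d \<in> X"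
    and P: "a \<in> P" "b \<in> P" "c \<in> P" "d \<in> P" and dist: "distinct [a, b, c, d]"
    and edges: "adj PE a b" "adj PE b c" "adj PE c d"
    and non_edges: "\<not> adj PE a c" "\<not> adj PE a d" "\<not> adj PE b d"
  shows "f b \<in> X \<and> f c \<in> X"
proof (rule induced_P4_in_m3_convex[OF X])
  show "distinct [f a, f b, f c, f d]" using dist P inj by (auto simp: inj_on_eq_iff)
qed (use fP P emb edges non_edges in auto)

lemma house_adj:
  "adj house_edges 4 0" "adj house_edges 0 3" "adj house_edges 3 2"
  "adj house_edges 4 1" "adj house_edges 1 2" "adj house_edges 2 3"
  "\<not> adj house_edges 4 3" "\<not> adj house_edges 4 2" "\<not> adj house_edges 0 2"
  "\<not> adj house_edges 1 3"
  by (auto simp: adj_def house_edges_def doubleton_eq_iff)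

text \<open>With roof y = f 4: the induced paths y-0-3-2 and y-1-2-3 show that {y, f 2}
  and {y, f 3} generate each other.\<close>
lemma convex_geometry_house_free:
  assumes cg: "convex_geometry V (m33_convex_sets V E)"
  shows "house_free V E"
  unfolding house_free_def contains_induced_def
proof
  assume "\<exists>f. inj_on f {0..<5} \<and> f ` {0..<5} \<subseteq> V \<and>
    (\<forall>x\<in>{0..<5}. \<forall>y\<in>{0..<5}. adj house_edges x y = adj E (f x) (f y))"
  then obtain f where inj: "inj_on f {0..<5::nat}" and fP: "f ` {0..<5} \<subseteq> V"
    and emb: "\<forall>x\<in>{0..<5}. \<forall>y\<in>{0..<5}. adj house_edges x y = adj E (f x) (f y)" by blast
  note P4 = embedded_P4_in_m3_convex[OF inj fP emb]
  have distinct: "f 2 \<noteq> f 3" "f 2 \<noteq> f 4" using inj by (auto simp: inj_on_eq_iff)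
  have "{f 4, f 2} \<subseteq> {f 4}"
  proof (rule m3_generators_meet_in_point[OF cg])
    show "{f 4, f 3} \<subseteq> X" if "m3_convex V E X" "{f 4, f 2} \<subseteq> X" for X
      using P4[of X 4 2 0 3] that house_adj by auto
    show "{f 4, f 2} \<subseteq> X" if "m3_convex V E X" "{f 4, f 3} \<subseteq> X" for X
      using P4[of X 4 3 1 2] that house_adj by auto
  qed (use fP distinct in auto)
  with distinct show False by simp
qed

lemma domino_adj:
  "adj domino_edges 1 2" "adj domino_edges 2 3" "adj domino_edges 3 4"
  "adj domino_edges 4 5" "adj domino_edges 5 0" "adj domino_edges 0 1"
  "adj domino_edges 2 1" "adj domino_edges 1 0" "adj domino_edges 0 5"
  "\<not> adj domino_edges 1 3" "\<not> adj domino_edges 1 4" "\<not> adj domino_edges 2 4"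
  "\<not> adj domino_edges 4 0" "\<not> adj domino_edges 5 1" "\<not> adj domino_edges 2 5"
  "\<not> adj domino_edges 3 5" "\<not> adj domino_edges 2 0" "\<not> adj domino_edges 1 5"
  "\<not> adj domino_edges 4 1"
  by (auto simp: adj_def domino_edges_def doubleton_eq_iff)

text \<open>The two squares 0-1-2-3 and 0-3-4-5 share the chord 0-3; the four induced paths
  1-2-3-4, 4-5-0-1, 2-3-4-5 and 2-1-0-5 show that {f 1, f 4} and {f 2, f 5} generate
  each other.\<close>
lemma convex_geometry_domino_free:
  assumes cg: "convex_geometry V (m33_convex_sets V E)"
  shows "domino_free V E"
  unfolding domino_free_def contains_induced_def
proof
  assume "\<exists>f. inj_on f {0..<6} \<and> f ` {0..<6} \<subseteq> V \<and>
    (\<forall>x\<in>{0..<6}. \<forall>y\<in>{0..<6}. adj domino_edges x y = adj E (f x) (f y))"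
  then obtain f where inj: "inj_on f {0..<6::nat}" and fP: "f ` {0..<6} \<subseteq> V"
    and emb: "\<forall>x\<in>{0..<6}. \<forall>y\<in>{0..<6}. adj domino_edges x y = adj E (f x) (f y)" by blast
  note P4 = embedded_P4_in_m3_convex[OF inj fP emb]
  have distinct: "f 1 \<noteq> f 2" "f 1 \<noteq> f 5" "f 4 \<noteq> f 2" "f 4 \<noteq> f 5" "f 4 \<noteq> f 1"
    using inj by (auto simp: inj_on_eq_iff)
  have "{f 1, f 4} \<subseteq> {f 1}"
  proof (rule m3_generators_meet_in_point[OF cg])
    show "{f 2, f 5} \<subseteq> X" if "m3_convex V E X" "{f 1, f 4} \<subseteq> X" for X
      using P4[of X 1 4 2 3] P4[of X 4 1 5 0] that domino_adj by simp
    show "{f 1, f 4} \<subseteq> X" if "m3_convex V E X" "{f 2, f 5} \<subseteq> X" for X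
      using P4[of X 2 5 3 4] P4[of X 2 5 1 0] that domino_adj by simp
  qed (use fP distinct in auto)
  with distinct show False by simp
qed

lemma cycle_edges_adj:
  assumes n: "n \<ge> 3" and i: "i < n" and j: "j < n"
  shows "adj (cycle_edges n) i j \<longleftrightarrow>
    j = i + 1 \<or> i = j + 1 \<or> (i = 0 \<and> j = n - 1) \<or> (j = 0 \<and> i = n - 1)"
proof
  assume "adj (cycle_edges n) i j"
  then obtain k where k: "k < n" "{i, j} = {k, (k + 1) mod n}"
    unfolding adj_def cycle_edges_def by auto
  show "j = i + 1 \<or> i = j + 1 \<or> (i = 0 \<and> j = n - 1) \<or> (j = 0 \<and> i = n - 1)"
  proof (cases "k + 1 < n")
    case True
    with k show ?thesis by (auto simp: doubleton_eq_iff)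
  next
    case False
    with k have "k = n - 1" by simp
    with k n have "{i, j} = {n - 1, 0}" by simp
    then show ?thesis by (auto simp: doubleton_eq_iff)
  qed
next
  assume h: "j = i + 1 \<or> i = j + 1 \<or> (i = 0 \<and> j = n - 1) \<or> (j = 0 \<and> i = n - 1)"
  have edge: "{k, (k + 1) mod n} \<in> cycle_edges n" if "k < n" for k
    using that unfolding cycle_edges_def by blast
  have last_edge: "{n - 1, 0} \<in> cycle_edges n"
    using edge[of "n - 1"] n by simp
  from h have "{i, j} \<in> cycle_edges n"
    using edge[of i] edge[of j] last_edge i j by (auto simp: insert_commute)
  moreover have "i \<noteq> j" using h n by auto
  ultimately show "adj (cycle_edges n) i j" unfolding adj_def by simp
qed

text \<open>In a hole f 0, ..., f (n - 1), every stretch of at least four consecutive vertices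
  avoiding the wrap-around edge is an induced path.\<close>
lemma hole_segment_in_m3_convex:
  fixes n a m :: nat
  assumes n: "n \<ge> 5" and inj: "inj_on f {0..<n}" and fP: "f ` {0..<n} \<subseteq> V"
    and adj_f: "\<And>i j. i < n \<Longrightarrow> j < n \<Longrightarrow> adj E (f i) (f j) \<longleftrightarrow>
      j = i + 1 \<or> i = j + 1 \<or> (i = 0 \<and> j = n - 1) \<or> (j = 0 \<and> i = n - 1)"
    and X: "m3_convex V E X"
    and seg: "a + m \<le> n" "m \<ge> 4" "a \<ge> 1 \<or> a + m < n"
    and ends: "f a \<in> X" "f (a + m - 1) \<in> X"
  shows "f ` {a..<a + m} \<subseteq> X"
proof -
  let ?xs = "map f [a..<a + m]"
  have "inj_on f {a..<a + m}" by (rule inj_on_subset[OF inj]) (use seg in auto)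
  moreover have "adj E (?xs ! i) (?xs ! j) \<longleftrightarrow> j = i + 1 \<or> i = j + 1"
    if "i < m" "j < m" for i j
    using that adj_f[of "a + i" "a + j"] seg n by auto
  ultimately have "induced_path V E ?xs (f a) (f (a + m - 1))"
    using fP seg unfolding induced_path_def by (auto simp: distinct_map hd_map last_map)
  from induced_path_in_m3_convex[OF X this _ ends] seg show ?thesis by simp
qed

text \<open>In a hole 0, ..., n - 1 the pairs {f 0, f (n - 2)} and {f 1, f (n - 1)} generate
  each other: the long path 0, ..., n - 2 (resp. 1, ..., n - 1) is followed by a
  short induced path across the wrap-around edge.\<close>
lemma convex_geometry_hole_free:
  assumes cg: "convex_geometry V (m33_convex_sets V E)"
  shows "hole_free V E"
  unfolding hole_free_def
proof (intro allI impI)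
  fix n :: nat assume n: "n \<ge> 5"
  show "\<not> contains_induced V E {0..<n} (cycle_edges n)"
    unfolding contains_induced_def
  proof
    assume "\<exists>f. inj_on f {0..<n} \<and> f ` {0..<n} \<subseteq> V \<and>
      (\<forall>x\<in>{0..<n}. \<forall>y\<in>{0..<n}. adj (cycle_edges n) x y = adj E (f x) (f y))"
    then obtain f where inj: "inj_on f {0..<n}" and fP: "f ` {0..<n} \<subseteq> V"
      and emb: "\<forall>x\<in>{0..<n}. \<forall>y\<in>{0..<n}. adj (cycle_edges n) x y = adj E (f x) (f y)"
      by blast
    have adj_f: "adj E (f i) (f j) \<longleftrightarrow>
        j = i + 1 \<or> i = j + 1 \<or> (i = 0 \<and> j = n - 1) \<or> (j = 0 \<and> i = n - 1)"
      if "i < n" "j < n" for i j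
      using emb that cycle_edges_adj[of n i j] n by auto
    have fne: "f i \<noteq> f j" if "i < n" "j < n" "i \<noteq> j" for i j
      using inj that by (auto simp: inj_on_eq_iff)
    have fV: "f i \<in> V" if "i < n" for i using fP that by auto
    have segment: "f ` {a..<a + m} \<subseteq> X"
      if "m3_convex V E X" "a + m \<le> n" "m \<ge> 4" "a \<ge> 1 \<or> a + m < n"
        "f a \<in> X" "f (a + m - 1) \<in> X" for X a m
      by (rule hole_segment_in_m3_convex[OF n inj fP _ that]) (fact adj_f)
    have "{f 0, f (n - 2)} \<subseteq> {f 0}"
    proof (rule m3_generators_meet_in_point[OF cg])
      show "{f 1, f (n - 1)} \<subseteq> X" if X: "m3_convex V E X" "{f 0, f (n - 2)} \<subseteq> X" for X
      proof -
        have "f ` {0..<0 + (n - 1)} \<subseteq> X"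
          by (rule segment[OF X(1)]) (use n X(2) in \<open>auto simp: numeral_eq_Suc\<close>)
        then have path: "f k \<in> X" if "k < n - 1" for k using that by auto
        have "f (n - 2) \<in> X \<and> f (n - 1) \<in> X"
        proof (rule induced_P4_in_m3_convex[OF X(1) path[of "n - 3"] path[of 0]])
          show "distinct [f (n - 3), f (n - 2), f (n - 1), f 0]"
            using fne[of "n - 3" "n - 2"] fne[of "n - 3" "n - 1"] fne[of "n - 3" 0]
              fne[of "n - 2" "n - 1"] fne[of "n - 2" 0] fne[of "n - 1" 0] n by auto
        qed (use n fV adj_f in auto)
        then show ?thesis using path[of 1] n by auto
      qed
      show "{f 0, f (n - 2)} \<subseteq> X" if X: "m3_convex V E X" "{f 1, f (n - 1)} \<subseteq> X" for X
      proof -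
        have "f ` {1..<1 + (n - 1)} \<subseteq> X"
          by (rule segment[OF X(1)]) (use n X(2) in auto)
        then have path: "f k \<in> X" if "1 \<le> k" "k < n" for k using that n by auto
        have "f (n - 1) \<in> X \<and> f 0 \<in> X"
        proof (rule induced_P4_in_m3_convex[OF X(1) path[of "n - 2"] path[of 1]])
          show "distinct [f (n - 2), f (n - 1), f 0, f 1]"
            using fne[of "n - 2" "n - 1"] fne[of "n - 2" 0] fne[of "n - 2" 1]
              fne[of "n - 1" 0] fne[of "n - 1" 1] fne[of 0 1] n by auto
        qed (use n fV adj_f in auto)
        then show ?thesis using path[of "n - 2"] n by auto
      qed
    qed (use fV fne[of 0 1] fne[of 0 "n - 1"] fne[of "n - 2" 1] fne[of "n - 2" "n - 1"] n
          in auto)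
    then show False using fne[of 0 "n - 2"] n by auto
  qed
qed

theorem mainTheorem4:
  fixes V :: "'a set" and E :: "'a set set"
  assumes "graph V E"
    and "connected_graph V E"
    and "convex_geometry V (m33_convex_sets V E)"
  shows "house_free V E \<and> hole_free V E \<and> domino_free V E"
  using convex_geometry_house_free[OF assms(3)] convex_geometry_hole_free[OF assms(3)]
    convex_geometry_domino_free[OF assms(3)]
  by blast

end
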